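(* For every $d \in \{2,3,4,5,7,8,9,12,16,24,56,72\}$, the sequence $\left(\left\lfloor n^6/d \right\rfloor\right)_{n \ge 1}$ is eventually prime-free.
   Context: A sequence $(a_n)_{n\ge 1}$ of positive integers is called eventually prime-free if there exists an index $n_0$ such that $a_n$ is composite for all $n \ge n_0$. (Here, as in the paper, this is understood as: only finitely many terms $a_n$ are prime.) *)

theory Defs
  imports Complex_Main "HOL-Computational_Algebra.Primes"
begin

definition eventually_prime_free :: "(nat \<Rightarrow> nat) \<Rightarrow> bool" where
  "eventually_prime_free a \<longleftrightarrow> (\<exists>n0. \<forall>n\<ge>n0. n \<ge> 1 \<longrightarrow> \<not> prime (a n))"

end

theory Submission
  imports Defs
begin

text \<open>Every sixth power is congruent modulo each of the listed \<open>d\<close> to a square \<open>s\<^sup>2\<close>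
  with \<open>s \<le> 8\<close> or to the cube \<open>2\<^sup>3\<close>. Writing \<open>n\<^sup>6 = (n\<^sup>3)\<^sup>2 = (n\<^sup>2)\<^sup>3\<close>, the number
  \<open>d \<lfloor>n\<^sup>6/d\<rfloor>\<close> is then a difference of two squares or of two cubes, hence a product
  of two factors that both exceed \<open>d\<close> once \<open>n\<close> is large. A prime \<open>q\<close> with \<open>d q = a b\<close>
  would divide one of them, forcing the other to be at most \<open>d\<close>.\<close>

lemma not_prime_if_mult_eq_mult_of_greater:
  fixes d q a b :: nat
  assumes eq: "d * q = a * b" and "d < a" "d < b"
  shows "\<not> prime q"
proof
  assume q: "prime q"
  have not_dvd: "\<not> q dvd a" if "d * q = a * b" "d < a" "d < b" for a b
  proof
    assume "q dvd a"
    then obtain k where a: "a = q * k" ..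
    with that(1) q have "d = k * b"
      by (simp add: prime_gt_0_nat)
    moreover from a that(2) have "k > 0"
      by (cases k) auto
    ultimately show False
      using that(3) by simp
  qed
  from q eq have "q dvd a \<or> q dvd b"
    by (metis dvd_triv_right prime_dvd_mult_iff)
  with not_dvd[OF eq \<open>d < a\<close> \<open>d < b\<close>] not_dvd[of b a] eq \<open>d < a\<close> \<open>d < b\<close> show False
    by (simp add: mult.commute)
qed

lemma not_prime_div_if_mod_eq_square:
  fixes x d s :: nat
  assumes "x\<^sup>2 mod d = s\<^sup>2" and "d + s < x"
  shows "\<not> prime (x\<^sup>2 div d)"
proof -
  obtain t where x: "x = s + t" and "d < t"
    using assms(2) by (intro that[of "x - s"]) auto
  have "d * (x\<^sup>2 div d) + s\<^sup>2 = x\<^sup>2"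
    using assms(1) by (metis div_mult_mod_eq mult.commute)
  also have "\<dots> = t * (t + 2 * s) + s\<^sup>2"
    unfolding x by (simp add: power2_eq_square algebra_simps)
  finally have "d * (x\<^sup>2 div d) = t * (t + 2 * s)"
    by simp
  then show ?thesis
    by (rule not_prime_if_mult_eq_mult_of_greater) (use \<open>d < t\<close> in simp_all)
qed

lemma not_prime_div_if_mod_eq_cube:
  fixes x d c :: nat
  assumes "x ^ 3 mod d = c ^ 3" and "d + c < x"
  shows "\<not> prime (x ^ 3 div d)"
proof -
  obtain t where x: "x = c + t" and "d < t"
    using assms(2) by (intro that[of "x - c"]) auto
  have "d * (x ^ 3 div d) + c ^ 3 = x ^ 3"
    using assms(1) by (metis div_mult_mod_eq mult.commute)
  also have "\<dots> = t * (t\<^sup>2 + 3 * t * c + 3 * c\<^sup>2) + c ^ 3"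
    unfolding x by (simp add: power2_eq_square power3_eq_cube algebra_simps)
  finally have "d * (x ^ 3 div d) = t * (t\<^sup>2 + 3 * t * c + 3 * c\<^sup>2)"
    by simp
  then show ?thesis
    by (rule not_prime_if_mult_eq_mult_of_greater)
      (use \<open>d < t\<close> le_square[of t] in \<open>unfold power2_eq_square, linarith+\<close>)
qed

lemma power_mod_mem_if_residues_mem:
  fixes m e n :: nat
  assumes "0 < m" and "\<forall>k\<in>{..<m}. k ^ e mod m \<in> S"
  shows "n ^ e mod m \<in> S"
  using assms by (metis lessThan_iff mod_less_divisor power_mod)

lemma mod_mem_image_if_dvd:
  fixes d m x :: nat
  assumes "d dvd m" and "x mod m \<in> S"
  shows "x mod d \<in> (\<lambda>r. r mod d) ` S"
  using assms by (metis image_eqI mod_mod_cancel)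

lemma sixth_power_mod_eq_square_or_eight:
  fixes n d :: nat
  assumes "d \<in> {2,3,4,5,7,8,9,12,16,24,56,72}"
  shows "n ^ 6 mod d \<in> power2 ` {0,1,2,3,4,7,8} \<union> {2 ^ 3}"
proof -
  have mod72: "n ^ 6 mod 72 \<in> {0,1,9,64}" and mod56: "n ^ 6 mod 56 \<in> {0,1,8,49}"
    and mod16: "n ^ 6 mod 16 \<in> {0,1,9}" and mod5: "n ^ 6 mod 5 \<in> {0,1,4}"
    by (rule power_mod_mem_if_residues_mem; simp add: lessThan_nat_numeral)+
  consider "d dvd 72" | "d dvd 56" | "d = 16" | "d = 5"
    using assms by auto
  then show ?thesis
  proof cases
    case 1
    with mod_mem_image_if_dvd[OF this mod72] assms show ?thesis
      by auto
  next
    case 2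
    with mod_mem_image_if_dvd[OF this mod56] assms show ?thesis
      by auto
  qed (use mod16 mod5 in auto)
qed

lemma not_prime_sixth_power_div:
  fixes n d :: nat
  assumes "d \<le> 72" and "9 \<le> n" and "n ^ 6 mod d \<in> power2 ` {0,1,2,3,4,7,8} \<union> {2 ^ 3}"
  shows "\<not> prime (n ^ 6 div d)"
proof -
  have "(n ^ 3)\<^sup>2 = n ^ 6" and "(n\<^sup>2) ^ 3 = n ^ 6"
    by (simp_all flip: power_mult)
  note square_case = not_prime_div_if_mod_eq_square[of "n ^ 3" d, unfolded this(1)]
   and cube_case = not_prime_div_if_mod_eq_cube[of "n\<^sup>2" d 2, unfolded this(2)]
  have "81 \<le> n\<^sup>2" and "729 \<le> n ^ 3"
    using power_mono[OF \<open>9 \<le> n\<close>, of 2] power_mono[OF \<open>9 \<le> n\<close>, of 3] by simp_all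
  from assms(3) show ?thesis
  proof (elim UnE imageE)
    fix s
    assume residue: "n ^ 6 mod d = s\<^sup>2" and "s \<in> {0,1,2,3,4,7,8}"
    then have "d + s < n ^ 3"
      using \<open>d \<le> 72\<close> \<open>729 \<le> n ^ 3\<close> by auto
    with residue show ?thesis
      by (rule square_case)
  next
    assume "n ^ 6 mod d \<in> {2 ^ 3}"
    moreover have "d + 2 < n\<^sup>2"
      using \<open>d \<le> 72\<close> \<open>81 \<le> n\<^sup>2\<close> by simp
    ultimately show ?thesis
      by (intro cube_case) simp_all
  qed
qed

theorem theorem4:
  fixes d :: nat
  assumes "d \<in> {2,3,4,5,7,8,9,12,16,24,56,72}"
  shows "eventually_prime_free (\<lambda>n. nat \<lfloor>real (n ^ 6) / real d\<rfloor>)"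
  unfolding eventually_prime_free_def
proof (intro exI[of _ 9] allI impI)
  fix n :: nat
  assume "n \<ge> 9"
  moreover have "d \<le> 72"
    using assms by auto
  ultimately have "\<not> prime (n ^ 6 div d)"
    using sixth_power_mod_eq_square_or_eight[OF assms] by (intro not_prime_sixth_power_div)
  then show "\<not> prime (nat \<lfloor>real (n ^ 6) / real d\<rfloor>)"
    by (metis floor_divide_of_nat_eq nat_int)
qed

end
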